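(* Assume $r>\mu$, $C-rK_O>0$, $C+rK_I>0$ and $K_I+K_O\ge0$. Then the equation \[ A(\lambda_2-\lambda_1)p^{\lambda_1}+\frac{e^{(\mu-r)\delta}}{r-\mu}(\lambda_2-1)p-\lambda_2e^{-r\delta}\left(\frac{C}{r}+K_I\right)=0 \] has exactly two solutions $p_1,p_2$ in $(0,+\infty)$, and they satisfy $p_1\le p_O$ and $p_2>p_O$. Furthermore, $\lambda_1Ap_2^{\lambda_1-1}+\frac{e^{(\mu-r)\delta}}{r-\mu}>0$.
   Context: Constants: $\mu\in\mathbb{R}$, $\sigma>0$, $r>0$, $C,K_I,K_O\in\mathbb{R}$, $\delta\ge0$. $\lambda_1<\lambda_2$ are the roots of $r-\mu\lambda-\frac12\sigma^2\lambda(\lambda-1)=0$ (so $\lambda_1<0$, $\lambda_2>1$ when $r>\mu$). $p_O:=e^{-\mu\delta}\frac{\lambda_1}{\lambda_1-1}(r-\mu)\left(\frac{C}{r}-K_O\right)$ and $A:=e^{(\mu-r)\delta}p_O^{1-\lambda_1}/(\lambda_1(\mu-r))$. *)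

theory Defs
  imports "HOL-Analysis.Analysis"
begin

definition p_O :: "real \<Rightarrow> real \<Rightarrow> real \<Rightarrow> real \<Rightarrow> real \<Rightarrow> real \<Rightarrow> real" where
  "p_O \<mu> r C K_O \<delta> lam1 =
     exp (- \<mu> * \<delta>) * (lam1 / (lam1 - 1)) * (r - \<mu>) * (C / r - K_O)"

definition A_coef :: "real \<Rightarrow> real \<Rightarrow> real \<Rightarrow> real \<Rightarrow> real \<Rightarrow> real \<Rightarrow> real" where
  "A_coef \<mu> r C K_O \<delta> lam1 =
     exp ((\<mu> - r) * \<delta>) * (p_O \<mu> r C K_O \<delta> lam1) powr (1 - lam1) / (lam1 * (\<mu> - r))"

end

theory Submission
  imports Defs
begin

text \<open>
  By Vieta's formulas for the characteristic equation, \<open>lam1 < 0\<close> and \<open>lam2 > 1\<close>, so the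
  equation reads \<open>G p = c * p powr l + d * p - b = 0\<close> with \<open>c, d, b > 0\<close> and \<open>l < 0\<close>.
  Such a \<open>G\<close> tends to \<open>+\<infinity>\<close> at both ends of \<open>(0, \<infinity>)\<close> and has a strictly increasing
  derivative, so it falls until its critical point and rises afterwards. The coefficient \<open>A\<close> is
  normalised so that \<open>lam1 * A * p_O powr (lam1 - 1) = - exp ((\<mu> - r) * \<delta>) / (r - \<mu>)\<close>;
  consequently \<open>G p_O = - lam2 * exp (- r * \<delta>) * (K_I + K_O) \<le> 0\<close> and \<open>G' p_O < 0\<close>. Thus
  \<open>p_O\<close> lies left of the critical point, one zero lies in \<open>(0, p_O]\<close> and the other beyond
  the critical point. The final inequality holds because \<open>p \<mapsto> lam1 * A * p powr (lam1 - 1)\<close>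
  is increasing.
\<close>

locale powr_affine =
  fixes c d b l :: real
  assumes c_pos: "c > 0" and d_pos: "d > 0" and b_pos: "b > 0" and l_neg: "l < 0"
begin

definition G :: "real \<Rightarrow> real" where
  "G p = c * p powr l + d * p - b"

definition G' :: "real \<Rightarrow> real" where
  "G' p = c * l * p powr (l - 1) + d"

definition crit :: real where
  "crit = (- d / (c * l)) powr (1 / (l - 1))"

lemma has_real_derivative_G: "x > 0 \<Longrightarrow> (G has_real_derivative G' x) (at x)"
  unfolding G_def[abs_def] G'_def
  by (auto intro!: derivative_eq_intros has_real_derivative_powr[THEN DERIV_cmult, of x c l, simplified])

lemma continuous_on_G: "x > 0 \<Longrightarrow> continuous_on {x..y} G"
  by (auto intro!: continuous_at_imp_continuous_on DERIV_isCont[OF has_real_derivative_G])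

lemma crit_pos: "crit > 0"
  using c_pos d_pos l_neg by (simp add: crit_def divide_pos_neg mult_pos_neg)

lemma G'_crit: "G' crit = 0"
proof -
  have "- d / (c * l) > 0" using c_pos d_pos l_neg by (simp add: divide_pos_neg mult_pos_neg)
  then have "crit powr (l - 1) = - d / (c * l)"
    using c_pos d_pos l_neg unfolding crit_def by (simp add: powr_powr abs_mult)
  then show ?thesis using c_pos l_neg by (simp add: G'_def)
qed

lemma G'_strict_mono: "0 < x \<Longrightarrow> x < y \<Longrightarrow> G' x < G' y"
  using powr_less_mono2_neg[of "l - 1" x y] c_pos l_neg
  by (simp add: G'_def mult_less_cancel_left_neg mult_pos_neg)

lemma G_strict_antimono:
  assumes "0 < x" "x < y" "y \<le> crit"
  shows "G y < G x"
proof (rule DERIV_neg_imp_decreasing_open[OF \<open>x < y\<close> _ continuous_on_G[OF \<open>0 < x\<close>]])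
  fix t assume "x < t" "t < y"
  then have "G' t < G' crit" using assms G'_strict_mono by simp
  moreover have "(G has_real_derivative G' t) (at t)"
    using \<open>x < t\<close> assms has_real_derivative_G by simp
  ultimately show "\<exists>D. (G has_real_derivative D) (at t) \<and> D < 0"
    using G'_crit by auto
qed

lemma G_strict_mono:
  assumes "crit \<le> x" "x < y"
  shows "G x < G y"
proof (rule DERIV_pos_imp_increasing_open[OF \<open>x < y\<close> _ continuous_on_G])
  show "x > 0" using assms crit_pos by simp
  fix t assume "x < t" "t < y"
  then have "G' crit < G' t" using assms crit_pos G'_strict_mono by simp
  moreover have "(G has_real_derivative G' t) (at t)"
    using \<open>x < t\<close> assms crit_pos has_real_derivative_G by simp
  ultimately show "\<exists>D. (G has_real_derivative D) (at t) \<and> D > 0"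
    using G'_crit by auto
qed

lemma G_inj_below_crit: "0 < x \<Longrightarrow> 0 < y \<Longrightarrow> x \<le> crit \<Longrightarrow> y \<le> crit \<Longrightarrow> G x = G y \<Longrightarrow> x = y"
  by (metis G_strict_antimono less_irrefl linorder_cases)

lemma G_inj_above_crit: "crit \<le> x \<Longrightarrow> crit \<le> y \<Longrightarrow> G x = G y \<Longrightarrow> x = y"
  by (metis G_strict_mono less_irrefl linorder_cases)

lemma G_pos_near_0:
  assumes "q > 0"
  obtains p where "0 < p" "p \<le> q" "G p > 0"
proof
  define M where "M = b / c + 1"
  have M: "M > 0" unfolding M_def using b_pos c_pos by (simp add: add_pos_pos)
  define p where "p = min q (M powr (1 / l))"
  show "0 < p" "p \<le> q" using assms M by (auto simp: p_def)
  have "M = (M powr (1 / l)) powr l" using M l_neg by (simp add: powr_powr)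
  also have "\<dots> \<le> p powr l"
    using powr_mono2'[of l p "M powr (1 / l)"] l_neg \<open>0 < p\<close> by (simp add: p_def)
  finally have "c * M \<le> c * p powr l" using c_pos by simp
  moreover have "c * M = b + c" using c_pos by (simp add: M_def field_simps)
  moreover have "d * p > 0" using d_pos \<open>0 < p\<close> by simp
  ultimately show "G p > 0" using c_pos by (simp add: G_def)
qed

lemma G_pos_at_top:
  obtains p where "q < p" "G p > 0"
proof
  define p where "p = max q (b / d) + 1"
  show "q < p" by (simp add: p_def)
  have "b < d * p" using d_pos by (simp add: p_def field_simps max_def)
  moreover have "c * p powr l \<ge> 0" using c_pos by simp
  ultimately show "G p > 0" by (simp add: G_def)
qed

theorem two_zeros:
  assumes "q > 0" "G q \<le> 0" "G' q < 0"
  shows "\<exists>p1 p2. 0 < p1 \<and> p1 < p2 \<and> {p. 0 < p \<and> G p = 0} = {p1, p2} \<and> p1 \<le> q \<and> q < p2"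
proof -
  have "q < crit"
  proof (rule ccontr)
    assume "\<not> q < crit"
    then have "G' crit \<le> G' q" using G'_strict_mono[of crit q] crit_pos by fastforce
    then show False using G'_crit assms(3) by simp
  qed
  then have G_crit: "G crit < 0" using G_strict_antimono assms by fastforce
  obtain q0 where q0: "0 < q0" "q0 \<le> q" "G q0 > 0" using G_pos_near_0 assms(1) .
  obtain p1 where p1: "q0 \<le> p1" "p1 \<le> q" "G p1 = 0"
    using IVT2'[of G q 0 q0, OF assms(2) _ q0(2) continuous_on_G[OF q0(1)]] q0 by auto
  obtain q' where q': "crit < q'" "G q' > 0" using G_pos_at_top .
  obtain p2 where p2: "crit \<le> p2" "p2 \<le> q'" "G p2 = 0"
    using IVT'[of G crit 0 q', OF _ _ _ continuous_on_G[OF crit_pos]] G_crit q' by auto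
  have "crit < p2" using p2 G_crit by (cases "p2 = crit") auto
  have zeros: "{p. 0 < p \<and> G p = 0} = {p1, p2}"
  proof (intro set_eqI iffI)
    fix p assume p: "p \<in> {p. 0 < p \<and> G p = 0}"
    show "p \<in> {p1, p2}"
    proof (cases "p \<le> crit")
      case True
      then have "p = p1" using G_inj_below_crit[of p p1] p p1 q0 \<open>q < crit\<close> by simp
      then show ?thesis by simp
    next
      case False
      then have "p = p2" using G_inj_above_crit[of p p2] p p2 by simp
      then show ?thesis by simp
    qed
  next
    fix p assume "p \<in> {p1, p2}"
    then show "p \<in> {p. 0 < p \<and> G p = 0}" using p1 p2 q0 \<open>crit < p2\<close> crit_pos by auto
  qed
  have "0 < p1" "p1 < p2" "q < p2" using p1 q0 \<open>q < crit\<close> \<open>crit < p2\<close> by linarith+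
  with zeros p1 show ?thesis by blast
qed

end

lemma characteristic_roots_sign:
  fixes \<mu> s r l1 l2 :: real
  assumes "s > 0" "r > 0" "\<mu> < r" "l1 < l2"
    and "r - \<mu> * l1 - s * l1 * (l1 - 1) = 0" "r - \<mu> * l2 - s * l2 * (l2 - 1) = 0"
  shows "l1 < 0" "1 < l2"
proof -
  have "(l1 - l2) * (\<mu> + s * (l1 + l2 - 1)) = 0"
    using assms(5,6) by (simp add: algebra_simps)
  then have \<mu>: "\<mu> = - s * (l1 + l2 - 1)" using assms(4) by simp
  have "r = - s * (l1 * l2)" using assms(5) unfolding \<mu> by (simp add: algebra_simps)
  then have "l1 * l2 < 0"
    using assms(1,2) mult_nonneg_nonneg[of s "l1 * l2"] by fastforce
  then show "l1 < 0" using assms(4) by (auto simp: mult_less_0_iff)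
  have "r - \<mu> = - s * ((1 - l1) * (1 - l2))"
    using \<open>r = _\<close> \<mu> by (simp add: algebra_simps)
  then have "(1 - l1) * (1 - l2) < 0"
    using assms(1,3) mult_nonneg_nonneg[of s "(1 - l1) * (1 - l2)"] by fastforce
  with \<open>l1 < 0\<close> show "1 < l2" by (auto simp: mult_less_0_iff)
qed

lemma p_O_pos:
  assumes "lam1 < 0" "\<mu> < r" "K_O < C / r"
  shows "p_O \<mu> r C K_O \<delta> lam1 > 0"
proof -
  have "lam1 / (lam1 - 1) > 0" using assms(1) by (simp add: divide_neg_neg)
  then show ?thesis
    unfolding p_O_def using assms(2,3) by (intro mult_pos_pos) auto
qed

lemma A_coef_pos:
  assumes "lam1 < 0" "\<mu> < r" "K_O < C / r"
  shows "A_coef \<mu> r C K_O \<delta> lam1 > 0"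
proof -
  have "lam1 * (\<mu> - r) > 0" using assms(1,2) by (simp add: mult_neg_neg)
  then show ?thesis
    using p_O_pos[OF assms, of \<delta>] by (simp add: A_coef_def)
qed

lemma lam1_A_coef_p_O_powr:
  assumes "p_O \<mu> r C K_O \<delta> lam1 > 0" "lam1 \<noteq> 0" "\<mu> \<noteq> r"
  shows "lam1 * A_coef \<mu> r C K_O \<delta> lam1 * p_O \<mu> r C K_O \<delta> lam1 powr (lam1 - 1)
           = - exp ((\<mu> - r) * \<delta>) / (r - \<mu>)"
proof -
  have "p_O \<mu> r C K_O \<delta> lam1 powr (1 - lam1) * p_O \<mu> r C K_O \<delta> lam1 powr (lam1 - 1) = 1"
    using assms(1) by (simp add: powr_add[symmetric])
  then show ?thesis using assms(2,3) by (simp add: A_coef_def field_simps)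
qed

lemma A_coef_p_O_powr:
  assumes "lam1 < 0" "\<mu> < r" "K_O < C / r"
  shows "A_coef \<mu> r C K_O \<delta> lam1 * p_O \<mu> r C K_O \<delta> lam1 powr lam1
           = exp ((\<mu> - r) * \<delta>) * exp (- \<mu> * \<delta>) * (C / r - K_O) / (1 - lam1)"
proof -
  let ?p = "p_O \<mu> r C K_O \<delta> lam1"
  define X where "X = A_coef \<mu> r C K_O \<delta> lam1 * ?p powr lam1"
  define E where "E = exp ((\<mu> - r) * \<delta>) * exp (- \<mu> * \<delta>)"
  define Y where "Y = C / r - K_O"
  have p: "?p > 0" using p_O_pos[OF assms] .
  have "lam1 * X = lam1 * A_coef \<mu> r C K_O \<delta> lam1 * ?p powr (lam1 - 1) * ?p"
    using p by (simp add: X_def powr_diff)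
  also have "\<dots> = - exp ((\<mu> - r) * \<delta>) / (r - \<mu>) * ?p"
    using lam1_A_coef_p_O_powr[OF p] assms by simp
  also have "\<dots> = - E * Y * lam1 / (lam1 - 1)"
    using assms by (simp add: p_O_def E_def Y_def)
  finally have "lam1 * X = - E * Y * lam1 / (lam1 - 1)" .
  then have "lam1 * (X * (1 - lam1) - E * Y) = 0" using assms(1) by (simp add: field_simps)
  then have "X * (1 - lam1) = E * Y" using assms(1) by simp
  then have "X = E * Y / (1 - lam1)" using assms(1) by (simp add: field_simps)
  then show ?thesis by (simp add: X_def E_def Y_def)
qed

lemma powr_equation_at_p_O:
  assumes "lam1 < 0" "\<mu> < r" "K_O < C / r"
  shows "A_coef \<mu> r C K_O \<delta> lam1 * (lam2 - lam1) * p_O \<mu> r C K_O \<delta> lam1 powr lam1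
           + exp ((\<mu> - r) * \<delta>) / (r - \<mu>) * (lam2 - 1) * p_O \<mu> r C K_O \<delta> lam1
           - lam2 * exp (- r * \<delta>) * (C / r + K_I)
         = - lam2 * exp (- r * \<delta>) * (K_I + K_O)"
proof -
  define E where "E = exp ((\<mu> - r) * \<delta>) * exp (- \<mu> * \<delta>)"
  define Y where "Y = C / r - K_O"
  have E: "exp (- r * \<delta>) = E" by (simp add: E_def exp_add[symmetric] algebra_simps)
  define P where "P = A_coef \<mu> r C K_O \<delta> lam1 * p_O \<mu> r C K_O \<delta> lam1 powr lam1"
  define Q where "Q = exp ((\<mu> - r) * \<delta>) / (r - \<mu>) * p_O \<mu> r C K_O \<delta> lam1"
  have "Q = E * Y * lam1 / (lam1 - 1)"
    using assms by (simp add: Q_def p_O_def E_def Y_def)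
  then have Q: "Q = - E * Y * lam1 / (1 - lam1)"
    by (simp add: divide_minus_right[symmetric])
  have P: "P = E * Y / (1 - lam1)"
    using A_coef_p_O_powr[OF assms] by (simp add: P_def E_def Y_def)
  have "A_coef \<mu> r C K_O \<delta> lam1 * (lam2 - lam1) * p_O \<mu> r C K_O \<delta> lam1 powr lam1
           + exp ((\<mu> - r) * \<delta>) / (r - \<mu>) * (lam2 - 1) * p_O \<mu> r C K_O \<delta> lam1
         = (lam2 - lam1) * P + (lam2 - 1) * Q"
    by (simp add: P_def Q_def algebra_simps)
  also have "\<dots> = E * Y * ((lam2 - lam1) - (lam2 - 1) * lam1) / (1 - lam1)"
    unfolding P Q by (simp add: diff_divide_distrib add_divide_distrib algebra_simps)
  also have "(lam2 - lam1) - (lam2 - 1) * lam1 = lam2 * (1 - lam1)"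
    by (simp add: algebra_simps)
  also have "E * Y * (lam2 * (1 - lam1)) / (1 - lam1) = lam2 * E * Y"
    using assms(1) by simp
  finally show ?thesis unfolding E Y_def by (simp add: algebra_simps)
qed

lemma powr_equation_slope_at_p_O:
  assumes "lam1 < 0" "\<mu> < r" "K_O < C / r"
  shows "A_coef \<mu> r C K_O \<delta> lam1 * (lam2 - lam1) * lam1 * p_O \<mu> r C K_O \<delta> lam1 powr (lam1 - 1)
           + exp ((\<mu> - r) * \<delta>) / (r - \<mu>) * (lam2 - 1)
         = exp ((\<mu> - r) * \<delta>) / (r - \<mu>) * (lam1 - 1)"
proof -
  define a where "a = exp ((\<mu> - r) * \<delta>) / (r - \<mu>)"
  have "lam1 * A_coef \<mu> r C K_O \<delta> lam1 * p_O \<mu> r C K_O \<delta> lam1 powr (lam1 - 1) = - a"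
    using lam1_A_coef_p_O_powr[OF p_O_pos[OF assms]] assms by (simp add: a_def)
  then have "A_coef \<mu> r C K_O \<delta> lam1 * (lam2 - lam1) * lam1 * p_O \<mu> r C K_O \<delta> lam1 powr (lam1 - 1)
      = - (lam2 - lam1) * a"
    by (metis minus_mult_commute mult.assoc mult.commute)
  then show ?thesis unfolding a_def[symmetric] by (simp add: algebra_simps)
qed

lemma lam1_A_coef_powr_plus_pos:
  assumes "lam1 < 0" "\<mu> < r" "K_O < C / r" "p_O \<mu> r C K_O \<delta> lam1 < p"
  shows "lam1 * A_coef \<mu> r C K_O \<delta> lam1 * p powr (lam1 - 1) + exp ((\<mu> - r) * \<delta>) / (r - \<mu>) > 0"
proof -
  let ?p = "p_O \<mu> r C K_O \<delta> lam1"
  have "p powr (lam1 - 1) < ?p powr (lam1 - 1)"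
    using powr_less_mono2_neg[of "lam1 - 1" ?p p] p_O_pos[OF assms(1-3)] assms by simp
  moreover have "lam1 * A_coef \<mu> r C K_O \<delta> lam1 < 0"
    using A_coef_pos[OF assms(1-3)] assms(1) by (simp add: mult_neg_pos)
  ultimately have "lam1 * A_coef \<mu> r C K_O \<delta> lam1 * ?p powr (lam1 - 1)
      < lam1 * A_coef \<mu> r C K_O \<delta> lam1 * p powr (lam1 - 1)"
    by (simp add: mult_less_cancel_left_neg)
  then show ?thesis
    using lam1_A_coef_p_O_powr[OF p_O_pos[OF assms(1-3)]] assms(1,2) by simp
qed

theorem lemma5p7:
  fixes \<mu> \<sigma> r C K_I K_O \<delta> lam1 lam2 :: real
  assumes "\<sigma> > 0" and "r > 0" and "\<delta> \<ge> 0"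
    and "r - \<mu> * lam1 - 1/2 * \<sigma>^2 * lam1 * (lam1 - 1) = 0"
    and "r - \<mu> * lam2 - 1/2 * \<sigma>^2 * lam2 * (lam2 - 1) = 0"
    and "lam1 < lam2"
    and "r > \<mu>" and "C - r * K_O > 0" and "C + r * K_I > 0" and "K_I + K_O \<ge> 0"
  defines "A \<equiv> A_coef \<mu> r C K_O \<delta> lam1"
    and "pO \<equiv> p_O \<mu> r C K_O \<delta> lam1"
    and "F \<equiv> (\<lambda>p. A_coef \<mu> r C K_O \<delta> lam1 * (lam2 - lam1) * p powr lam1
                 + exp ((\<mu> - r) * \<delta>) / (r - \<mu>) * (lam2 - 1) * p
                 - lam2 * exp (- r * \<delta>) * (C / r + K_I))"
  shows "\<exists>p1 p2. 0 < p1 \<and> p1 < p2 \<and> {p. 0 < p \<and> F p = 0} = {p1, p2}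
           \<and> p1 \<le> pO \<and> p2 > pO
           \<and> lam1 * A * p2 powr (lam1 - 1) + exp ((\<mu> - r) * \<delta>) / (r - \<mu>) > 0"
proof -
  have lam1: "lam1 < 0" and lam2: "1 < lam2"
    using characteristic_roots_sign[of "1/2 * \<sigma>^2" r \<mu> lam1 lam2] assms(1-7) by auto
  have K_O: "K_O < C / r" and "C / r + K_I > 0" using assms(2,8,9) by (simp_all add: field_simps)
  define a where "a = exp ((\<mu> - r) * \<delta>) / (r - \<mu>)"
  define b where "b = lam2 * exp (- r * \<delta>) * (C / r + K_I)"
  interpret powr_affine "A * (lam2 - lam1)" "a * (lam2 - 1)" b lam1
    using A_coef_pos[OF lam1 assms(7) K_O] \<open>C / r + K_I > 0\<close> lam1 lam2 assms(6,7)
    by unfold_locales (simp_all add: A_def a_def b_def)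
  have F: "F = G" unfolding F_def G_def[abs_def] unfolding A_def a_def b_def by (simp add: algebra_simps)
  have "G pO = - lam2 * exp (- r * \<delta>) * (K_I + K_O)"
    unfolding F[symmetric] F_def pO_def by (rule powr_equation_at_p_O[OF lam1 assms(7) K_O])
  then have "G pO \<le> 0" using lam2 assms(10) by simp
  moreover have "G' pO < 0"
  proof -
    have "G' pO = a * (lam1 - 1)"
      unfolding G'_def unfolding A_def a_def pO_def
      by (rule powr_equation_slope_at_p_O[OF lam1 assms(7) K_O])
    moreover have "a > 0" using assms(7) by (simp add: a_def)
    ultimately show ?thesis using lam1 by (simp add: mult_pos_neg)
  qed
  moreover have "pO > 0" using p_O_pos[OF lam1 assms(7) K_O] by (simp add: pO_def)
  ultimately obtain p1 p2 where
    "0 < p1" "p1 < p2" "{p. 0 < p \<and> G p = 0} = {p1, p2}" "p1 \<le> pO" "pO < p2"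
    using two_zeros by blast
  moreover have "lam1 * A * p2 powr (lam1 - 1) + exp ((\<mu> - r) * \<delta>) / (r - \<mu>) > 0"
    using lam1_A_coef_powr_plus_pos[OF lam1 assms(7) K_O] \<open>pO < p2\<close> by (simp add: A_def pO_def)
  ultimately show ?thesis unfolding F by (intro exI[of _ p1] exI[of _ p2] conjI)
qed

end
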